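(* Let $k\ge2$, $-\frac{\pi}{2}\le\theta_1<\dots<\theta_k\le\frac{\pi}{2}$ and $\hat\theta_1,\dots,\hat\theta_k\in[-\frac{\pi}{2},\frac{\pi}{2}]$, and let $\epsilon>0$. Assume $$\|\eta_{k,k}(\theta_1,\dots,\theta_k,\hat\theta_1,\dots,\hat\theta_k)\|_\infty<\epsilon\quad\text{and}\quad\theta_{\min}=\min_{q\ne j}|\theta_q-\theta_j|\ge\Big(\frac{4\epsilon}{\lambda(k)}\Big)^{1/k}.$$ Then after reordering the $\hat\theta_j$, for all $j=1,\dots,k$, $$|\hat\theta_j-\theta_j|<\frac{\theta_{\min}}{2}\quad\text{and}\quad|\hat\theta_j-\theta_j|\le\frac{2^{k-1}\epsilon}{(k-2)!\,\theta_{\min}^{k-1}}.$$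
   Context: For $z_1,\dots,z_p,\hat z_1,\dots,\hat z_q\in\mathbb C$, $\eta_{p,q}(z_1,\dots,z_p,\hat z_1,\dots,\hat z_q)\in\mathbb R^p$ is the vector whose $j$-th entry is $\prod_{l=1}^q|z_j-\hat z_l|$. For an integer $k\ge1$: $\xi(1)=\frac12$; $\xi(k)=\frac{(\frac{k-1}{2})!(\frac{k-3}{2})!}{4}$ if $k\ge3$ is odd; $\xi(k)=\frac{((\frac{k-2}{2})!)^2}{4}$ if $k$ is even. For $k\ge2$: $\lambda(2)=1$ and $\lambda(k)=\xi(k-2)$ for $k\ge3$. *)

theory Defs
  imports Complex_Main "HOL-Combinatorics.Permutations"
begin

definition eta :: "nat \<Rightarrow> nat \<Rightarrow> (nat \<Rightarrow> complex) \<Rightarrow> (nat \<Rightarrow> complex) \<Rightarrow> nat \<Rightarrow> real" where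
  "eta p q z zh j = (\<Prod>l=1..q. cmod (z j - zh l))"

definition infnorm_vec :: "nat \<Rightarrow> (nat \<Rightarrow> real) \<Rightarrow> real" where
  "infnorm_vec p v = Max ((\<lambda>j. \<bar>v j\<bar>) ` {1..p})"

definition xi :: "nat \<Rightarrow> real" where
  "xi k = (if k = 1 then 1/2
           else if odd k then fact ((k-1) div 2) * fact ((k-3) div 2) / 4
           else (fact ((k-2) div 2))^2 / 4)"

definition lam :: "nat \<Rightarrow> real" where
  "lam k = (if k = 2 then 1 else xi (k-2))"

definition theta_min :: "nat \<Rightarrow> (nat \<Rightarrow> real) \<Rightarrow> real" where
  "theta_min k \<theta> = Min {\<bar>\<theta> q - \<theta> j\<bar> | q j. q \<in> {1..k} \<and> j \<in> {1..k} \<and> q \<noteq> j}"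

end

theory Submission
  imports Defs "HOL-Computational_Algebra.Polynomial"
begin

text \<open>
  Let \<open>p x = (\<Prod>l. x - \<theta>h l)\<close> and \<open>w x = (\<Prod>m. x - \<theta> m)\<close>. Both are monic of degree \<open>k\<close>,
  so \<open>p - w\<close> is the Lagrange interpolant of the values \<open>p (\<theta> i)\<close>, all of modulus below \<open>\<epsilon>\<close>.
  Since the increasing nodes satisfy \<open>\<bar>\<theta> i - \<theta> m\<bar> \<ge> \<bar>i - m\<bar> d\<close> with \<open>d = theta_min k \<theta>\<close>, and
  \<open>lam k * 2^k \<le> 4 * fact (k-1)\<close>, the hypothesis on \<open>d\<close> makes this interpolant smaller than
  \<open>\<bar>w\<bar>\<close> at every point at distance at least \<open>d/2\<close> from all nodes; there \<open>p\<close> has the sign of \<open>w\<close>.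
  As \<open>w\<close> changes sign between \<open>\<theta> j - d/2\<close> and \<open>\<theta> j + d/2\<close>, so does \<open>p\<close>, which therefore has a
  root within \<open>d/2\<close> of every node; the nodes being \<open>d\<close>-apart, this matching is a permutation.
  Finally \<open>\<bar>p (\<theta> j)\<bar> < \<epsilon>\<close>, and the other \<open>k - 1\<close> factors of \<open>p (\<theta> j)\<close> are bounded below by
  \<open>fact (k-2) * (d/2)^(k-1)\<close>, which yields the quantitative estimate.
\<close>

section \<open>Factorial inequalities and the constant \<open>lam\<close>\<close>

lemma fact_le_prod_odd:
  "a + b = Suc n \<Longrightarrow> fact n \<le> (\<Prod>t=1..a. 2 * real t - 1) * (\<Prod>t=1..b. 2 * real t - 1)"
proof (induction n arbitrary: a b)
  case 0
  then have "(a = 1 \<and> b = 0) \<or> (a = 0 \<and> b = 1)" by auto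
  then show ?case by auto
next
  case (Suc n)
  have larger_first: "fact (Suc n) \<le> (\<Prod>t=1..a. 2 * real t - 1) * (\<Prod>t=1..b. 2 * real t - 1)"
    if ab: "a + b = Suc (Suc n)" "b \<le> a" for a b
  proof -
    have a: "a \<ge> 1" "real (Suc n) \<le> 2 * real a - 1" using ab by auto
    have IH: "fact n \<le> (\<Prod>t=1..a-1. 2 * real t - 1) * (\<Prod>t=1..b. 2 * real t - 1)"
      using Suc.IH[of "a-1" b] ab by auto
    have split: "(\<Prod>t=1..a. 2 * real t - 1) = (2 * real a - 1) * (\<Prod>t=1..a-1. 2 * real t - 1)"
      using a by (cases a) (auto simp: prod.nat_ivl_Suc')
    have "fact (Suc n) = real (Suc n) * fact n" by simp
    also have "\<dots> \<le> (2 * real a - 1) * ((\<Prod>t=1..a-1. 2 * real t - 1) * (\<Prod>t=1..b. 2 * real t - 1))"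
      by (rule mult_mono[OF a(2) IH]) (use a(1) in \<open>auto intro!: mult_nonneg_nonneg prod_nonneg\<close>)
    finally show ?thesis by (simp only: split mult.assoc)
  qed
  show ?case
    using larger_first[of a b] larger_first[of b a] Suc.prems by (cases "b \<le> a") (auto simp: mult.commute)
qed

lemma sum_inverse_fact_mult_fact:
  assumes "k \<ge> 1"
  shows "(\<Sum>i=1..k. 1 / (fact (i-1) * fact (k-i) :: real)) = 2^(k-1) / fact (k-1)"
proof -
  define n where "n = k - 1"
  have k: "k = Suc n" using assms n_def by auto
  have "(\<Sum>i=1..k. 1 / (fact (i-1) * fact (k-i) :: real)) = (\<Sum>t\<le>n. 1 / (fact t * fact (n - t)))"
    by (rule sum.reindex_bij_witness[of _ "\<lambda>t. t + 1" "\<lambda>i. i - 1"]) (auto simp: k)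
  also have "\<dots> = (\<Sum>t\<le>n. real (n choose t) / fact n)"
    by (rule sum.cong) (auto simp: binomial_fact)
  also have "\<dots> = 2^n / fact n"
    by (simp flip: sum_divide_distrib of_nat_sum add: choose_row_sum)
  finally show ?thesis by (simp add: n_def)
qed

lemma fact_square_mult_four_power_le: "(fact a)^2 * 4^a \<le> (fact (2*a+3) :: real)"
proof (induction a)
  case 0 then show ?case by (simp add: fact_numeral)
next
  case (Suc a)
  have "(fact (Suc a))^2 * 4^(Suc a) = (4 * real (Suc a)^2) * ((fact a)^2 * 4^a :: real)"
    by (simp add: power2_eq_square algebra_simps)
  also have "\<dots> \<le> (real (2*a+4) * real (2*a+5)) * fact (2*a+3)"
    by (rule mult_mono[OF _ Suc.IH]) (auto simp: power2_eq_square algebra_simps)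
  also have "\<dots> = fact (2 * Suc a + 3)"
    by (simp add: algebra_simps numeral_eq_Suc)
  finally show ?case .
qed

lemma fact_mult_fact_two_power_le: "fact (Suc b) * fact b * 2^(2*b+1) \<le> (fact (2*b+4) :: real)"
proof (induction b)
  case 0 then show ?case by (simp add: fact_numeral)
next
  case (Suc b)
  have "fact (Suc (Suc b)) * fact (Suc b) * 2^(2*Suc b+1)
        = (4 * real (Suc (Suc b)) * real (Suc b)) * (fact (Suc b) * fact b * 2^(2*b+1) :: real)"
    by (simp add: algebra_simps)
  also have "\<dots> \<le> (real (2*b+5) * real (2*b+6)) * fact (2*b+4)"
    by (rule mult_mono[OF _ Suc.IH]) (auto simp: algebra_simps)
  also have "\<dots> = fact (2 * Suc b + 4)"
    by (simp add: algebra_simps numeral_eq_Suc)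
  finally show ?case .
qed

lemma xi_mult_two_power_le_fact:
  assumes "n \<ge> 1"
  shows "xi n * 2^n \<le> fact (n+1)"
proof -
  consider "n = 1" | b where "n = 2*b+3" | a where "n = 2*a+2"
  proof -
    have "n = 1 \<or> (\<exists>b. n = 2*b+3) \<or> (\<exists>a. n = 2*a+2)" using assms by presburger
    then show ?thesis using that by blast
  qed
  then show ?thesis
  proof cases
    case 1 then show ?thesis by (simp add: xi_def)
  next
    case (2 b)
    then have "xi n * 2^n = fact (Suc b) * fact b * 2^(2*b+1)"
      by (simp add: xi_def power_add)
    also have "\<dots> \<le> fact (2*b+4)" by (rule fact_mult_fact_two_power_le)
    finally show ?thesis by (simp add: 2 numeral_eq_Suc)
  next
    case (3 a)
    then have "xi n * 2^n = (fact a)^2 * 4^a"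
      by (simp add: xi_def power_add power_mult)
    also have "\<dots> \<le> fact (2*a+3)" by (rule fact_square_mult_four_power_le)
    finally show ?thesis by (simp add: 3 numeral_eq_Suc)
  qed
qed

text \<open>This is the only property of \<open>lam\<close> the argument uses.\<close>

lemma lam_mult_two_power_le_fact:
  assumes "k \<ge> 2"
  shows "lam k * 2^k \<le> 4 * fact (k-1)"
proof (cases "k = 2")
  case False
  then have n: "k - 2 \<ge> 1" "k = (k - 2) + 2" "k - 2 + 1 = k - 1" using assms by auto
  have "lam k * 2^k = 4 * (xi (k-2) * 2^(k-2))"
    using False by (subst (2) n(2)) (simp add: lam_def power_add)
  also have "\<dots> \<le> 4 * fact (k-1)"
    using xi_mult_two_power_le_fact[OF n(1)] by (simp only: n(3))
  finally show ?thesis .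
qed (simp add: lam_def)

lemma lam_pos: "lam k > 0"
  unfolding lam_def xi_def by auto

lemma root_lam_le_imp_eps_le:
  assumes k: "k \<ge> 2" and eps: "0 \<le> \<epsilon>" and root: "root k (4 * \<epsilon> / lam k) \<le> d"
  shows "\<epsilon> * 2^k \<le> fact (k-1) * d^k"
proof -
  have y: "0 \<le> 4 * \<epsilon> / lam k" using eps lam_pos[of k] by simp
  have d: "0 \<le> d" using y root by (meson order.trans real_root_ge_zero)
  have "4 * \<epsilon> / lam k = root k (4 * \<epsilon> / lam k) ^ k" using k y by simp
  also have "\<dots> \<le> d^k" using root y k by (intro power_mono) auto
  finally have "4 * \<epsilon> \<le> lam k * d^k" using lam_pos[of k] by (simp add: divide_le_eq mult.commute)
  then have "(4 * \<epsilon>) * 2^k \<le> (lam k * d^k) * 2^k" by (rule mult_right_mono) simp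
  also have "\<dots> = (lam k * 2^k) * d^k" by (simp only: mult_ac)
  also have "\<dots> \<le> (4 * fact (k-1)) * d^k"
    using lam_mult_two_power_le_fact[OF k] d by (intro mult_right_mono) auto
  finally show ?thesis by simp
qed

section \<open>Lagrange interpolation\<close>

lemma lagrange_interpolation:
  fixes q :: "'a::field poly" and t :: "'b \<Rightarrow> 'a"
  assumes fin: "finite S" and inj: "inj_on t S" and deg: "degree q < card S"
  shows "poly q x = (\<Sum>i\<in>S. poly q (t i) * (\<Prod>m\<in>S-{i}. (x - t m) / (t i - t m)))"
proof -
  define B where "B i = smult (inverse (\<Prod>m\<in>S-{i}. t i - t m)) (\<Prod>m\<in>S-{i}. [:- t m, 1:])" for i
  define L where "L = (\<Sum>i\<in>S. smult (poly q (t i)) (B i))"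
  have poly_B: "poly (B i) y = (\<Prod>m\<in>S-{i}. (y - t m) / (t i - t m))" for i y
    by (simp add: B_def poly_prod prod_dividef field_simps)
  have poly_B_node: "poly (B i) (t j) = (if i = j then 1 else 0)" if "i \<in> S" "j \<in> S" for i j
  proof (cases "i = j")
    case True
    have "t i - t m \<noteq> 0" if "m \<in> S - {i}" for m
      using inj \<open>i \<in> S\<close> that by (auto dest: inj_onD)
    then show ?thesis using True by (simp add: poly_B)
  next
    case False
    then show ?thesis using fin that by (auto simp: poly_B)
  qed
  have card_pos: "card S > 0" using deg by simp
  have deg_B: "degree (B i) \<le> card S - 1" if "i \<in> S" for i
  proof -
    have "degree (B i) \<le> degree (\<Prod>m\<in>S-{i}. [:- t m, 1:])"
      unfolding B_def by (rule degree_smult_le)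
    also have "\<dots> = card S - 1"
      using fin that by (subst degree_prod_eq_sum_degree) auto
    finally show ?thesis .
  qed
  have "degree L \<le> card S - 1"
    unfolding L_def by (rule degree_sum_le) (use fin deg_B in \<open>auto intro: order.trans[OF degree_smult_le]\<close>)
  then have "degree L < card S" using card_pos by linarith
  moreover have "poly q (t j) = poly L (t j)" if "j \<in> S" for j
    using fin that by (simp add: L_def poly_sum poly_B_node if_distrib cong: if_cong)
  ultimately have "q = L"
    using deg card_image[OF inj] by (intro poly_eqI_degree[where A = "t ` S"]) auto
  then have "poly q x = poly L x" by simp
  also have "\<dots> = (\<Sum>i\<in>S. poly q (t i) * (\<Prod>m\<in>S-{i}. (x - t m) / (t i - t m)))"
    by (simp add: L_def poly_sum poly_B)
  finally show ?thesis .
qed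

lemma prod_diff_eq_lagrange:
  fixes t h :: "'b \<Rightarrow> 'a::field"
  assumes fin: "finite S" and ne: "S \<noteq> {}" and inj: "inj_on t S"
  shows "(\<Prod>l\<in>S. x - h l) = (\<Prod>m\<in>S. x - t m)
           + (\<Sum>i\<in>S. (\<Prod>l\<in>S. t i - h l) * (\<Prod>m\<in>S-{i}. (x - t m) / (t i - t m)))"
proof -
  define P where "P = (\<Prod>l\<in>S. [:- h l, 1:])"
  define W where "W = (\<Prod>m\<in>S. [:- t m, 1:])"
  have deg: "degree P = card S" "degree W = card S"
    unfolding P_def W_def by (subst degree_prod_eq_sum_degree; simp)+
  have "lead_coeff P = 1" "lead_coeff W = 1"
    unfolding P_def W_def by (simp_all add: lead_coeff_prod)
  then have "coeff (P - W) (card S) = 0" using deg by simp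
  moreover have "degree (P - W) \<le> card S" using deg by (intro degree_diff_le) auto
  moreover have "card S > 0" using fin ne by auto
  ultimately have "degree (P - W) < card S"
    by (metis degree_0 le_neq_implies_less leading_coeff_0_iff)
  from lagrange_interpolation[OF fin inj this]
  have "poly (P - W) x = (\<Sum>i\<in>S. poly (P - W) (t i) * (\<Prod>m\<in>S-{i}. (x - t m) / (t i - t m)))" .
  moreover have "poly W (t i) = 0" if "i \<in> S" for i
    using fin that by (auto simp: W_def poly_prod)
  ultimately show ?thesis
    by (simp add: P_def W_def poly_prod algebra_simps cong: sum.cong)
qed

section \<open>Nodes separated proportionally to their index distance\<close>

definition index_separated :: "nat \<Rightarrow> real \<Rightarrow> (nat \<Rightarrow> real) \<Rightarrow> bool" where
  "index_separated k d \<theta> \<longleftrightarrow> (\<forall>i\<in>{1..k}. \<forall>m\<in>{1..k}. \<bar>real i - real m\<bar> * d \<le> \<bar>\<theta> i - \<theta> m\<bar>)"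

lemma index_separated_gap:
  assumes "index_separated k d \<theta>" "d \<ge> 0" "i \<in> {1..k}" "m \<in> {1..k}" "i \<noteq> m"
  shows "d \<le> \<bar>\<theta> i - \<theta> m\<bar>"
proof -
  have "1 \<le> \<bar>real i - real m\<bar>" using assms(5) by linarith
  then have "d \<le> \<bar>real i - real m\<bar> * d" using assms(2) by (simp add: mult_le_cancel_right1)
  also have "\<dots> \<le> \<bar>\<theta> i - \<theta> m\<bar>" using assms(1,3,4) unfolding index_separated_def by blast
  finally show ?thesis .
qed

lemma index_separated_inj_on:
  assumes "index_separated k d \<theta>" "d > 0"
  shows "inj_on \<theta> {1..k}"
proof (rule inj_onI)
  fix i m assume "i \<in> {1..k}" "m \<in> {1..k}" "\<theta> i = \<theta> m"
  then show "i = m" using index_separated_gap[OF assms(1)] assms(2) by force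
qed

lemma increasing_gaps_accumulate:
  assumes mono: "\<forall>i j. 1 \<le> i \<and> i < j \<and> j \<le> k \<longrightarrow> \<theta> i < \<theta> j"
    and gap: "\<forall>i\<in>{1..k}. \<forall>m\<in>{1..k}. i \<noteq> m \<longrightarrow> d \<le> \<bar>\<theta> i - \<theta> m\<bar>"
    and "1 \<le> i" "i \<le> m" "m \<le> k"
  shows "real (m - i) * d \<le> \<theta> m - \<theta> i"
  using \<open>i \<le> m\<close> \<open>m \<le> k\<close>
proof (induction m rule: dec_induct)
  case (step n)
  have n: "1 \<le> n" "Suc n \<le> k" using step \<open>1 \<le> i\<close> by auto
  have "\<theta> n < \<theta> (Suc n)" using mono[rule_format, of n "Suc n"] n by simp
  moreover have "d \<le> \<bar>\<theta> (Suc n) - \<theta> n\<bar>" using gap n by auto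
  moreover have "real (Suc n - i) * d = real (n - i) * d + d"
    using step.hyps by (simp add: Suc_diff_le distrib_right)
  moreover have "real (n - i) * d \<le> \<theta> n - \<theta> i" using step.IH step.prems by simp
  ultimately show ?case by linarith
qed simp

lemma index_separated_if_increasing:
  assumes mono: "\<forall>i j. 1 \<le> i \<and> i < j \<and> j \<le> k \<longrightarrow> \<theta> i < \<theta> j"
    and gap: "\<forall>i\<in>{1..k}. \<forall>m\<in>{1..k}. i \<noteq> m \<longrightarrow> d \<le> \<bar>\<theta> i - \<theta> m\<bar>"
  shows "index_separated k d \<theta>"
  unfolding index_separated_def
proof (intro ballI)
  fix i m assume i: "i \<in> {1..k}" and m: "m \<in> {1..k}"
  show "\<bar>real i - real m\<bar> * d \<le> \<bar>\<theta> i - \<theta> m\<bar>"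
  proof (cases "i \<le> m")
    case True
    then have "\<bar>real i - real m\<bar> = real (m - i)" by simp
    moreover have "real (m - i) * d \<le> \<theta> m - \<theta> i"
      using increasing_gaps_accumulate[OF mono gap, of i m] i m True by simp
    ultimately show ?thesis by (smt (verit))
  next
    case False
    then have "\<bar>real i - real m\<bar> = real (i - m)" by simp
    moreover have "real (i - m) * d \<le> \<theta> i - \<theta> m"
      using increasing_gaps_accumulate[OF mono gap, of m i] i m False by simp
    ultimately show ?thesis by (smt (verit))
  qed
qed

lemma prod_remove_index_distance:
  fixes g :: "real \<Rightarrow> 'a::comm_monoid_mult"
  assumes "i \<in> {1..k}"
  shows "(\<Prod>m\<in>{1..k}-{i}. g \<bar>real i - real m\<bar>) = (\<Prod>t=1..i-1. g (real t)) * (\<Prod>t=1..k-i. g (real t))"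
proof -
  have split: "{1..k}-{i} = {1..<i} \<union> {i<..k}" using assms by auto
  have "(\<Prod>m\<in>{1..k}-{i}. g \<bar>real i - real m\<bar>)
      = (\<Prod>m\<in>{1..<i}. g \<bar>real i - real m\<bar>) * (\<Prod>m\<in>{i<..k}. g \<bar>real i - real m\<bar>)"
    unfolding split by (rule prod.union_disjoint) auto
  also have "(\<Prod>m\<in>{1..<i}. g \<bar>real i - real m\<bar>) = (\<Prod>t=1..i-1. g (real t))"
    by (rule prod.reindex_bij_witness[of _ "\<lambda>t. i - t" "\<lambda>m. i - m"]) (auto simp: of_nat_diff)
  also have "(\<Prod>m\<in>{i<..k}. g \<bar>real i - real m\<bar>) = (\<Prod>t=1..k-i. g (real t))"
    by (rule prod.reindex_bij_witness[of _ "\<lambda>t. i + t" "\<lambda>m. m - i"]) (auto simp: of_nat_diff)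
  finally show ?thesis .
qed

lemma prod_remove_index_distance_fact:
  "i \<in> {1..k} \<Longrightarrow> (\<Prod>m\<in>{1..k}-{i}. \<bar>real i - real m\<bar>) = fact (i-1) * fact (k-i)"
  using prod_remove_index_distance[of i k "\<lambda>x. x"] by (simp add: fact_prod)

lemma prod_remove_node_distance_ge:
  assumes sep: "index_separated k d \<theta>" and d: "d \<ge> 0" and i: "i \<in> {1..k}"
  shows "d^(k-1) * (fact (i-1) * fact (k-i)) \<le> (\<Prod>m\<in>{1..k}-{i}. \<bar>\<theta> i - \<theta> m\<bar>)"
proof -
  have "d^(k-1) * (fact (i-1) * fact (k-i)) = (\<Prod>m\<in>{1..k}-{i}. \<bar>real i - real m\<bar>) * d^(k-1)"
    by (subst prod_remove_index_distance_fact[OF i]) simp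
  also have "\<dots> = (\<Prod>m\<in>{1..k}-{i}. \<bar>real i - real m\<bar> * d)"
    using i by (simp add: prod.distrib)
  also have "\<dots> \<le> (\<Prod>m\<in>{1..k}-{i}. \<bar>\<theta> i - \<theta> m\<bar>)"
    using sep i d unfolding index_separated_def by (intro prod_mono) auto
  finally show ?thesis .
qed

section \<open>A root of the perturbed polynomial near every node\<close>

lemma abs_lagrange_basis_le:
  assumes d: "d > 0" and sep: "index_separated k d \<theta>" and i: "i \<in> {1..k}"
    and far: "\<forall>m\<in>{1..k}. d/2 \<le> \<bar>x - \<theta> m\<bar>"
  shows "\<bar>\<Prod>m\<in>{1..k}-{i}. (x - \<theta> m) / (\<theta> i - \<theta> m)\<bar>
           \<le> 2 * \<bar>\<Prod>m\<in>{1..k}. x - \<theta> m\<bar> / (d^k * (fact (i-1) * fact (k-i)))"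
proof -
  define R where "R = (\<Prod>m\<in>{1..k}-{i}. \<bar>x - \<theta> m\<bar>)"
  define F where "F = (fact (i-1) * fact (k-i) :: real)"
  have R: "R \<ge> 0" unfolding R_def by (simp add: prod_nonneg)
  have F: "F > 0" unfolding F_def by simp
  have "\<bar>\<Prod>m\<in>{1..k}. x - \<theta> m\<bar> = \<bar>x - \<theta> i\<bar> * R"
    using i by (simp add: R_def prod.remove abs_mult abs_prod)
  moreover have "d * R \<le> (2 * \<bar>x - \<theta> i\<bar>) * R"
    using far[rule_format, OF i] R by (intro mult_right_mono) auto
  ultimately have dR: "d * R \<le> 2 * \<bar>\<Prod>m\<in>{1..k}. x - \<theta> m\<bar>" by simp
  have D: "d^(k-1) * F \<le> (\<Prod>m\<in>{1..k}-{i}. \<bar>\<theta> i - \<theta> m\<bar>)"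
    unfolding F_def using prod_remove_node_distance_ge[OF sep _ i] d by simp
  have pos: "0 < d^(k-1) * F" using d F by simp
  have dk: "d^k = d * d^(k-1)" using i by (simp flip: power_Suc)
  have "\<bar>\<Prod>m\<in>{1..k}-{i}. (x - \<theta> m) / (\<theta> i - \<theta> m)\<bar> = R / (\<Prod>m\<in>{1..k}-{i}. \<bar>\<theta> i - \<theta> m\<bar>)"
    by (simp add: R_def abs_prod prod_dividef)
  also have "\<dots> \<le> R / (d^(k-1) * F)"
    using D R pos less_le_trans[OF pos D] by (intro divide_left_mono) auto
  also have "\<dots> = d * R / (d^k * F)" using d by (simp add: dk)
  also have "\<dots> \<le> 2 * \<bar>\<Prod>m\<in>{1..k}. x - \<theta> m\<bar> / (d^k * F)"
    using dR d F by (intro divide_right_mono) auto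
  finally show ?thesis unfolding F_def .
qed

lemma abs_lagrange_sum_less:
  assumes k: "k \<ge> 1" and d: "d > 0" and sep: "index_separated k d \<theta>"
    and far: "\<forall>m\<in>{1..k}. d/2 \<le> \<bar>x - \<theta> m\<bar>"
    and c: "\<forall>i\<in>{1..k}. \<bar>c i\<bar> < \<epsilon>"
    and eps: "\<epsilon> * 2^k \<le> fact (k-1) * d^k"
  shows "\<bar>\<Sum>i\<in>{1..k}. c i * (\<Prod>m\<in>{1..k}-{i}. (x - \<theta> m) / (\<theta> i - \<theta> m))\<bar>
           < \<bar>\<Prod>m\<in>{1..k}. x - \<theta> m\<bar>"
proof -
  define W where "W = \<bar>\<Prod>m\<in>{1..k}. x - \<theta> m\<bar>"
  define A where "A i = \<bar>\<Prod>m\<in>{1..k}-{i}. (x - \<theta> m) / (\<theta> i - \<theta> m)\<bar>" for i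
  have inj: "inj_on \<theta> {1..k}" by (rule index_separated_inj_on[OF sep d])
  have A_pos: "A i > 0" if i: "i \<in> {1..k}" for i
  proof -
    have "x - \<theta> m \<noteq> 0" if "m \<in> {1..k}" for m using far d that by force
    moreover have "\<theta> i - \<theta> m \<noteq> 0" if "m \<in> {1..k} - {i}" for m
      using inj i that by (auto dest: inj_onD)
    ultimately show ?thesis unfolding A_def by auto
  qed
  have two_pow: "(2::real)^k = 2 * 2^(k-1)" using k by (cases k) auto
  have "\<epsilon> > 0" using c k by (meson abs_ge_zero atLeastAtMost_iff le_less_trans order_refl)
  have "\<bar>\<Sum>i\<in>{1..k}. c i * (\<Prod>m\<in>{1..k}-{i}. (x - \<theta> m) / (\<theta> i - \<theta> m))\<bar> \<le> (\<Sum>i\<in>{1..k}. \<bar>c i\<bar> * A i)"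
    unfolding A_def by (rule order.trans[OF sum_abs]) (simp add: abs_mult)
  also have "\<dots> < (\<Sum>i\<in>{1..k}. \<epsilon> * A i)"
    using k c A_pos by (intro sum_strict_mono) auto
  also have "\<dots> \<le> (\<Sum>i\<in>{1..k}. \<epsilon> * (2 * W / (d^k * (fact (i-1) * fact (k-i)))))"
    unfolding A_def W_def using abs_lagrange_basis_le[OF d sep _ far] \<open>\<epsilon> > 0\<close>
    by (intro sum_mono mult_left_mono) auto
  also have "\<dots> = \<epsilon> * (2 * W / d^k) * (\<Sum>i=1..k. 1 / (fact (i-1) * fact (k-i)))"
    by (simp add: sum_distrib_left)
  also have "\<dots> = W * (\<epsilon> * 2^k / (fact (k-1) * d^k))"
    by (subst sum_inverse_fact_mult_fact[OF k]) (simp add: two_pow field_simps)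
  also have "\<dots> \<le> W"
    using eps d unfolding W_def by (intro mult_left_le) auto
  finally show ?thesis unfolding W_def .
qed

lemma same_sign_off_nodes:
  assumes k: "k \<ge> 1" and d: "d > 0" and sep: "index_separated k d \<theta>"
    and far: "\<forall>m\<in>{1..k}. d/2 \<le> \<bar>y - \<theta> m\<bar>"
    and vals: "\<forall>i\<in>{1..k}. \<bar>\<Prod>l\<in>{1..k}. \<theta> i - \<theta>h l\<bar> < \<epsilon>"
    and eps: "\<epsilon> * 2^k \<le> fact (k-1) * d^k"
  shows "0 < (\<Prod>l\<in>{1..k}. y - \<theta>h l) * (\<Prod>m\<in>{1..k}. y - \<theta> m)"
proof -
  define w where "w = (\<Prod>m\<in>{1..k}. y - \<theta> m)"
  define L where "L = (\<Sum>i\<in>{1..k}. (\<Prod>l\<in>{1..k}. \<theta> i - \<theta>h l) * (\<Prod>m\<in>{1..k}-{i}. (y - \<theta> m) / (\<theta> i - \<theta> m)))"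
  have "(\<Prod>l\<in>{1..k}. y - \<theta>h l) = w + L"
    unfolding w_def L_def using k index_separated_inj_on[OF sep d] by (intro prod_diff_eq_lagrange) auto
  moreover have "\<bar>L\<bar> < \<bar>w\<bar>"
    unfolding L_def w_def by (rule abs_lagrange_sum_less[OF k d sep far vals eps])
  then have "\<bar>L\<bar> * \<bar>w\<bar> < \<bar>w\<bar> * \<bar>w\<bar>" by (intro mult_strict_right_mono) auto
  moreover have "- (L * w) \<le> \<bar>L\<bar> * \<bar>w\<bar>" by (simp add: abs_ge_minus_self flip: abs_mult)
  moreover have "\<bar>w\<bar> * \<bar>w\<bar> = w * w" by (rule abs_mult_self_eq)
  ultimately show ?thesis unfolding w_def[symmetric] by (simp add: distrib_right)
qed

lemma far_from_nodes_at_half_gap: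
  assumes sep: "index_separated k d \<theta>" and d: "d \<ge> 0" and j: "j \<in> {1..k}" and x: "\<bar>x - \<theta> j\<bar> = d/2"
  shows "\<forall>m\<in>{1..k}. d/2 \<le> \<bar>x - \<theta> m\<bar>"
proof
  fix m assume m: "m \<in> {1..k}"
  show "d/2 \<le> \<bar>x - \<theta> m\<bar>"
  proof (cases "m = j")
    case False
    then have "d \<le> \<bar>\<theta> j - \<theta> m\<bar>" using index_separated_gap[OF sep d j m] by simp
    then show ?thesis using x by linarith
  qed (use x in simp)
qed

lemma node_poly_sign_change:
  assumes d: "d > 0" and sep: "index_separated k d \<theta>" and j: "j \<in> {1..k}"
  shows "(\<Prod>m\<in>{1..k}. \<theta> j - d/2 - \<theta> m) * (\<Prod>m\<in>{1..k}. \<theta> j + d/2 - \<theta> m) < 0"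
proof -
  have "(\<Prod>m\<in>{1..k}. \<theta> j - d/2 - \<theta> m) * (\<Prod>m\<in>{1..k}. \<theta> j + d/2 - \<theta> m)
      = (\<Prod>m\<in>{1..k}. (\<theta> j - \<theta> m)^2 - (d/2)^2)"
    by (simp add: prod.distrib [symmetric] power2_eq_square algebra_simps)
  also have "\<dots> = - ((d/2)^2) * (\<Prod>m\<in>{1..k}-{j}. (\<theta> j - \<theta> m)^2 - (d/2)^2)"
    using j by (simp add: prod.remove)
  also have "\<dots> < 0"
  proof -
    have "(d/2)^2 < (\<theta> j - \<theta> m)^2" if "m \<in> {1..k}-{j}" for m
    proof -
      have "d \<le> \<bar>\<theta> j - \<theta> m\<bar>" using index_separated_gap[OF sep _ j] d that by auto
      then have "d/2 < \<bar>\<theta> j - \<theta> m\<bar>" using d by linarith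
      from power_strict_mono[OF this, of 2] show ?thesis using d by simp
    qed
    then have "0 < (\<Prod>m\<in>{1..k}-{j}. (\<theta> j - \<theta> m)^2 - (d/2)^2)" by (intro prod_pos) auto
    then show ?thesis using d by (simp add: mult_neg_pos)
  qed
  finally show ?thesis .
qed

lemma sign_change_imp_root:
  fixes f :: "real \<Rightarrow> real"
  assumes "a \<le> b" "continuous_on {a..b} f" "f a * f b < 0"
  shows "\<exists>x. a < x \<and> x < b \<and> f x = 0"
proof -
  have "\<exists>x. a \<le> x \<and> x \<le> b \<and> f x = 0"
  proof (cases "f a < 0")
    case True
    then show ?thesis using assms IVT'[of f a 0 b] by (auto simp: mult_less_0_iff)
  next
    case False
    then show ?thesis using assms IVT2'[of f b 0 a] by (auto simp: mult_less_0_iff)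
  qed
  then obtain x where x: "a \<le> x" "x \<le> b" "f x = 0" by blast
  moreover have "x \<noteq> a" "x \<noteq> b" using x assms(3) by auto
  ultimately show ?thesis by (intro exI[of _ x]) auto
qed

lemma root_near_node:
  assumes k: "k \<ge> 1" and d: "d > 0" and sep: "index_separated k d \<theta>"
    and vals: "\<forall>i\<in>{1..k}. \<bar>\<Prod>l\<in>{1..k}. \<theta> i - \<theta>h l\<bar> < \<epsilon>"
    and eps: "\<epsilon> * 2^k \<le> fact (k-1) * d^k"
    and j: "j \<in> {1..k}"
  shows "\<exists>l\<in>{1..k}. \<bar>\<theta>h l - \<theta> j\<bar> < d/2"
proof -
  define p where "p y = (\<Prod>l\<in>{1..k}. y - \<theta>h l)" for y
  define w where "w y = (\<Prod>m\<in>{1..k}. y - \<theta> m)" for y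
  define a where "a = \<theta> j - d/2"
  define b where "b = \<theta> j + d/2"
  have "0 < p a * w a" "0 < p b * w b"
    unfolding p_def w_def a_def b_def using d
    by (intro same_sign_off_nodes[OF k d sep _ vals eps] far_from_nodes_at_half_gap[OF sep _ j]; simp)+
  moreover have "w a * w b < 0"
    unfolding w_def a_def b_def by (rule node_poly_sign_change[OF d sep j])
  ultimately have "p a * p b < 0"
    by (smt (verit) mult_pos_pos mult_less_0_iff zero_less_mult_iff)
  moreover have "continuous_on {a..b} p" unfolding p_def by (intro continuous_intros)
  ultimately obtain x where x: "a < x" "x < b" "p x = 0"
    using sign_change_imp_root[of a b p] d unfolding a_def b_def by auto
  then have "\<bar>x - \<theta> j\<bar> < d/2" unfolding a_def b_def abs_less_iff by linarith
  moreover obtain l where "l \<in> {1..k}" "x = \<theta>h l" using x(3) unfolding p_def by auto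
  ultimately show ?thesis by blast
qed

section \<open>Matching the roots to the nodes\<close>

lemma permutation_of_close_matching:
  fixes x y :: "'b \<Rightarrow> 'a::metric_space"
  assumes fin: "finite S"
    and close: "\<forall>j\<in>S. \<exists>l\<in>S. dist (y l) (x j) < r"
    and apart: "\<forall>i\<in>S. \<forall>j\<in>S. i \<noteq> j \<longrightarrow> 2 * r \<le> dist (x i) (x j)"
  shows "\<exists>\<sigma>. \<sigma> permutes S \<and> (\<forall>j\<in>S. dist (y (\<sigma> j)) (x j) < r)"
proof -
  obtain g where g: "\<forall>j\<in>S. g j \<in> S \<and> dist (y (g j)) (x j) < r" using close by metis
  define \<sigma> where "\<sigma> j = (if j \<in> S then g j else j)" for j
  have "inj_on \<sigma> S"
  proof (rule inj_onI)
    fix i j assume ij: "i \<in> S" "j \<in> S" "\<sigma> i = \<sigma> j"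
    then have "dist (x i) (x j) \<le> dist (y (g i)) (x i) + dist (y (g j)) (x j)"
      using dist_triangle3[of "x i" "x j" "y (g i)"] by (simp add: \<sigma>_def)
    also have "\<dots> < 2 * r" using g ij(1,2) by (smt (verit))
    finally show "i = j" using apart ij by force
  qed
  then have "\<sigma> permutes S" using fin g by (intro inj_imp_permutes) (auto simp: \<sigma>_def)
  moreover have "\<forall>j\<in>S. dist (y (\<sigma> j)) (x j) < r" using g by (simp add: \<sigma>_def)
  ultimately show ?thesis by blast
qed

lemma prod_matched_distance_ge:
  assumes k: "k \<ge> 2" and d: "d > 0" and sep: "index_separated k d \<theta>"
    and close: "\<forall>m\<in>{1..k}. \<bar>y m - \<theta> m\<bar> < d/2" and j: "j \<in> {1..k}"
  shows "fact (k-2) * (d/2)^(k-1) \<le> (\<Prod>m\<in>{1..k}-{j}. \<bar>\<theta> j - y m\<bar>)"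
proof -
  have "fact (k-2) \<le> (\<Prod>t=1..j-1. 2 * real t - 1) * (\<Prod>t=1..k-j. 2 * real t - 1)"
    using j k by (intro fact_le_prod_odd) auto
  also have "\<dots> = (\<Prod>m\<in>{1..k}-{j}. 2 * \<bar>real j - real m\<bar> - 1)"
    using prod_remove_index_distance[OF j, of "\<lambda>t. 2 * t - 1"] by simp
  finally have "fact (k-2) * (d/2)^(k-1) \<le> (\<Prod>m\<in>{1..k}-{j}. 2 * \<bar>real j - real m\<bar> - 1) * (d/2)^(k-1)"
    using d by (intro mult_right_mono) auto
  also have "\<dots> = (\<Prod>m\<in>{1..k}-{j}. 2 * \<bar>real j - real m\<bar> - 1) * (\<Prod>m\<in>{1..k}-{j}. d/2)"
    using j by simp
  also have "\<dots> = (\<Prod>m\<in>{1..k}-{j}. (2 * \<bar>real j - real m\<bar> - 1) * (d/2))"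
    by (rule prod.distrib[symmetric])
  also have "\<dots> \<le> (\<Prod>m\<in>{1..k}-{j}. \<bar>\<theta> j - y m\<bar>)"
  proof (rule prod_mono)
    fix m assume m: "m \<in> {1..k}-{j}"
    have "1 \<le> \<bar>real j - real m\<bar>" using m by auto
    moreover have "\<bar>real j - real m\<bar> * d \<le> \<bar>\<theta> j - \<theta> m\<bar>" using sep j m unfolding index_separated_def by blast
    moreover have "\<bar>y m - \<theta> m\<bar> < d/2" using close m by blast
    moreover have "\<bar>\<theta> j - \<theta> m\<bar> \<le> \<bar>\<theta> j - y m\<bar> + \<bar>y m - \<theta> m\<bar>" by arith
    ultimately show "0 \<le> (2 * \<bar>real j - real m\<bar> - 1) * (d/2) \<and> (2 * \<bar>real j - real m\<bar> - 1) * (d/2) \<le> \<bar>\<theta> j - y m\<bar>"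
      using d by (simp add: algebra_simps)
  qed
  finally show ?thesis .
qed

lemma matched_error_le:
  assumes k: "k \<ge> 2" and d: "d > 0" and sep: "index_separated k d \<theta>" and perm: "\<sigma> permutes {1..k}"
    and close: "\<forall>m\<in>{1..k}. \<bar>\<theta>h (\<sigma> m) - \<theta> m\<bar> < d/2"
    and val: "\<bar>\<Prod>l\<in>{1..k}. \<theta> j - \<theta>h l\<bar> < \<epsilon>" and j: "j \<in> {1..k}"
  shows "\<bar>\<theta>h (\<sigma> j) - \<theta> j\<bar> \<le> 2^(k-1) * \<epsilon> / (fact (k-2) * d^(k-1))"
proof -
  define X where "X = fact (k-2) * (d/2)^(k-1)"
  have X: "X > 0" unfolding X_def using d by simp
  have "\<bar>\<Prod>l\<in>{1..k}. \<theta> j - \<theta>h l\<bar> = (\<Prod>m\<in>{1..k}. \<bar>\<theta> j - \<theta>h (\<sigma> m)\<bar>)"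
    unfolding abs_prod using prod.permute[OF perm] by simp
  also have "\<dots> = \<bar>\<theta>h (\<sigma> j) - \<theta> j\<bar> * (\<Prod>m\<in>{1..k}-{j}. \<bar>\<theta> j - \<theta>h (\<sigma> m)\<bar>)"
    using j by (simp add: prod.remove abs_minus_commute)
  also have "\<dots> \<ge> \<bar>\<theta>h (\<sigma> j) - \<theta> j\<bar> * X"
    unfolding X_def using prod_matched_distance_ge[OF k d sep close j] by (intro mult_left_mono) auto
  finally have "\<bar>\<theta>h (\<sigma> j) - \<theta> j\<bar> * X < \<epsilon>" using val by linarith
  then have "\<bar>\<theta>h (\<sigma> j) - \<theta> j\<bar> \<le> \<epsilon> / X" using X by (simp add: pos_le_divide_eq)
  also have "\<dots> = 2^(k-1) * \<epsilon> / (fact (k-2) * d^(k-1))" by (simp add: X_def power_divide)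
  finally show ?thesis .
qed

section \<open>The residual vector and the minimal separation\<close>

lemma eta_of_real:
  "eta p q (\<lambda>j. complex_of_real (x j)) (\<lambda>j. complex_of_real (y j)) j = \<bar>\<Prod>l=1..q. x j - y l\<bar>"
  unfolding eta_def abs_prod by (intro prod.cong refl) (simp flip: of_real_diff)

lemma abs_le_infnorm_vec: "j \<in> {1..p} \<Longrightarrow> \<bar>v j\<bar> \<le> infnorm_vec p v"
  unfolding infnorm_vec_def by (intro Max_ge) auto

lemma abs_prod_diff_lt_if_infnorm_eta_lt:
  assumes "infnorm_vec k (eta k k (\<lambda>j. complex_of_real (x j)) (\<lambda>j. complex_of_real (y j))) < \<epsilon>"
  shows "\<forall>i\<in>{1..k}. \<bar>\<Prod>l\<in>{1..k}. x i - y l\<bar> < \<epsilon>"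
proof
  fix i assume i: "i \<in> {1..k}"
  have "\<bar>\<Prod>l\<in>{1..k}. x i - y l\<bar> = \<bar>eta k k (\<lambda>j. complex_of_real (x j)) (\<lambda>j. complex_of_real (y j)) i\<bar>"
    by (simp add: eta_of_real)
  also have "\<dots> \<le> infnorm_vec k (eta k k (\<lambda>j. complex_of_real (x j)) (\<lambda>j. complex_of_real (y j)))"
    by (rule abs_le_infnorm_vec[OF i])
  finally show "\<bar>\<Prod>l\<in>{1..k}. x i - y l\<bar> < \<epsilon>" using assms by linarith
qed

lemma finite_theta_min_set:
  fixes \<theta> :: "nat \<Rightarrow> real"
  shows "finite {\<bar>\<theta> q - \<theta> j\<bar> | q j. q \<in> {1..k} \<and> j \<in> {1..k} \<and> q \<noteq> j}"
proof -
  have "{\<bar>\<theta> q - \<theta> j\<bar> | q j. q \<in> {1..k} \<and> j \<in> {1..k} \<and> q \<noteq> j}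
          \<subseteq> (\<lambda>(q, j). \<bar>\<theta> q - \<theta> j\<bar>) ` ({1..k} \<times> {1..k})"
    by auto
  then show ?thesis by (rule finite_subset) auto
qed

lemma theta_min_le:
  assumes "q \<in> {1..k}" "j \<in> {1..k}" "q \<noteq> j"
  shows "theta_min k \<theta> \<le> \<bar>\<theta> q - \<theta> j\<bar>"
  unfolding theta_min_def by (rule Min_le[OF finite_theta_min_set]) (use assms in blast)

lemma theta_min_pos:
  assumes k: "k \<ge> 2" and inj: "inj_on \<theta> {1..k}"
  shows "theta_min k \<theta> > 0"
proof -
  have "\<bar>\<theta> 1 - \<theta> 2\<bar> \<in> {\<bar>\<theta> q - \<theta> j\<bar> | q j. q \<in> {1..k} \<and> j \<in> {1..k} \<and> q \<noteq> j}"
    using k by fastforce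
  then have "theta_min k \<theta> \<in> {\<bar>\<theta> q - \<theta> j\<bar> | q j. q \<in> {1..k} \<and> j \<in> {1..k} \<and> q \<noteq> j}"
    unfolding theta_min_def by (intro Min_in finite_theta_min_set) auto
  then show ?thesis using inj by (auto simp: inj_on_eq_iff)
qed

lemma inj_on_if_increasing:
  fixes \<theta> :: "nat \<Rightarrow> 'a::linorder"
  assumes "\<forall>i j. 1 \<le> i \<and> i < j \<and> j \<le> k \<longrightarrow> \<theta> i < \<theta> j"
  shows "inj_on \<theta> {1..k}"
proof (rule inj_onI)
  fix i m assume "i \<in> {1..k}" "m \<in> {1..k}" "\<theta> i = \<theta> m"
  then show "i = m" using assms by (cases i m rule: linorder_cases) force+
qed

theorem lemma3p7:
  fixes k :: nat and \<theta> \<theta>h :: "nat \<Rightarrow> real" and \<epsilon> :: real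
  assumes "k \<ge> 2"
    and "\<forall>j\<in>{1..k}. - (pi/2) \<le> \<theta> j \<and> \<theta> j \<le> pi/2"
    and "\<forall>i j. 1 \<le> i \<and> i < j \<and> j \<le> k \<longrightarrow> \<theta> i < \<theta> j"
    and "\<forall>j\<in>{1..k}. - (pi/2) \<le> \<theta>h j \<and> \<theta>h j \<le> pi/2"
    and "\<epsilon> > 0"
    and "infnorm_vec k (eta k k (\<lambda>j. complex_of_real (\<theta> j)) (\<lambda>j. complex_of_real (\<theta>h j))) < \<epsilon>"
    and "theta_min k \<theta> \<ge> root k (4 * \<epsilon> / lam k)"
  shows "\<exists>\<sigma>. \<sigma> permutes {1..k} \<and>
           (\<forall>j\<in>{1..k}. \<bar>\<theta>h (\<sigma> j) - \<theta> j\<bar> < theta_min k \<theta> / 2 \<and>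
              \<bar>\<theta>h (\<sigma> j) - \<theta> j\<bar> \<le> 2^(k-1) * \<epsilon> / (fact (k-2) * theta_min k \<theta> ^ (k-1)))"
proof -
  note k = assms(1) and mono = assms(3)
  define d where "d = theta_min k \<theta>"
  have gap: "\<forall>i\<in>{1..k}. \<forall>m\<in>{1..k}. i \<noteq> m \<longrightarrow> d \<le> \<bar>\<theta> i - \<theta> m\<bar>"
    unfolding d_def using theta_min_le by blast
  have sep: "index_separated k d \<theta>" by (rule index_separated_if_increasing[OF mono gap])
  have d: "d > 0" unfolding d_def by (rule theta_min_pos[OF k inj_on_if_increasing[OF mono]])
  have eps: "\<epsilon> * 2^k \<le> fact (k-1) * d^k"
    unfolding d_def using k assms(5,7) by (intro root_lam_le_imp_eps_le) auto
  have vals: "\<forall>i\<in>{1..k}. \<bar>\<Prod>l\<in>{1..k}. \<theta> i - \<theta>h l\<bar> < \<epsilon>"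
    by (rule abs_prod_diff_lt_if_infnorm_eta_lt[OF assms(6)])
  have "\<forall>j\<in>{1..k}. \<exists>l\<in>{1..k}. dist (\<theta>h l) (\<theta> j) < d/2"
    using root_near_node[OF _ d sep vals eps] k by (simp add: dist_real_def)
  moreover have "\<forall>i\<in>{1..k}. \<forall>j\<in>{1..k}. i \<noteq> j \<longrightarrow> 2 * (d/2) \<le> dist (\<theta> i) (\<theta> j)"
    using gap by (simp add: dist_real_def)
  ultimately obtain \<sigma> where \<sigma>: "\<sigma> permutes {1..k}" "\<forall>j\<in>{1..k}. dist (\<theta>h (\<sigma> j)) (\<theta> j) < d/2"
    using permutation_of_close_matching[of "{1..k}"] by blast
  then have close: "\<forall>j\<in>{1..k}. \<bar>\<theta>h (\<sigma> j) - \<theta> j\<bar> < d/2" by (simp add: dist_real_def)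
  show ?thesis
    unfolding d_def[symmetric] using \<sigma>(1) close matched_error_le[OF k d sep \<sigma>(1) close] vals by blast
qed

end
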